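(* Let $G$ be a connected bipartite graph with an even number $q$ of edges that contains exactly one pendant vertex (vertex of degree $1$). Then $\chi_{la}(G)\ge 3$.
   Context: For a connected graph $G=(V,E)$ with $q=|E|$, a local antimagic labeling is a bijection $f:E\to\{1,\dots,q\}$ such that for every pair of adjacent vertices $x,y$ we have $f^+(x)\ne f^+(y)$, where $f^+(x)=\sum f(e)$ over all edges $e$ incident to $x$. The color number $c(f)$ is the number of distinct values of $f^+$, and the local antimagic chromatic number $\chi_{la}(G)$ is the minimum of $c(f)$ over all local antimagic labelings $f$ of $G$. *)

theory Defs
  imports Main
begin

definition simple_graph :: "'a set \<Rightarrow> 'a set set \<Rightarrow> bool" where
  "simple_graph V E \<longleftrightarrow> finite V \<and> (\<forall>e\<in>E. e \<subseteq> V \<and> card e = 2)"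

definition adjacent :: "'a set set \<Rightarrow> 'a \<Rightarrow> 'a \<Rightarrow> bool" where
  "adjacent E x y \<longleftrightarrow> {x, y} \<in> E"

definition connected_graph :: "'a set \<Rightarrow> 'a set set \<Rightarrow> bool" where
  "connected_graph V E \<longleftrightarrow> V \<noteq> {} \<and>
     (\<forall>u\<in>V. \<forall>v\<in>V. (u, v) \<in> {(x, y). adjacent E x y}\<^sup>*)"

definition bipartite_graph :: "'a set \<Rightarrow> 'a set set \<Rightarrow> bool" where
  "bipartite_graph V E \<longleftrightarrow> (\<exists>A\<subseteq>V. \<forall>e\<in>E. card (e \<inter> A) = 1)"

definition incident_edges :: "'a set set \<Rightarrow> 'a \<Rightarrow> 'a set set" where
  "incident_edges E x = {e\<in>E. x \<in> e}"

definition degree :: "'a set set \<Rightarrow> 'a \<Rightarrow> nat" where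
  "degree E x = card (incident_edges E x)"

definition pendant_vertices :: "'a set \<Rightarrow> 'a set set \<Rightarrow> 'a set" where
  "pendant_vertices V E = {v\<in>V. degree E v = 1}"

definition vertex_sum :: "'a set set \<Rightarrow> ('a set \<Rightarrow> nat) \<Rightarrow> 'a \<Rightarrow> nat" where
  "vertex_sum E f x = (\<Sum>e\<in>incident_edges E x. f e)"

definition local_antimagic_labeling :: "'a set \<Rightarrow> 'a set set \<Rightarrow> ('a set \<Rightarrow> nat) \<Rightarrow> bool" where
  "local_antimagic_labeling V E f \<longleftrightarrow>
     bij_betw f E {1..card E} \<and>
     (\<forall>x\<in>V. \<forall>y\<in>V. adjacent E x y \<longrightarrow> vertex_sum E f x \<noteq> vertex_sum E f y)"

definition color_number :: "'a set \<Rightarrow> 'a set set \<Rightarrow> ('a set \<Rightarrow> nat) \<Rightarrow> nat" where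
  "color_number V E f = card (vertex_sum E f ` V)"

end

theory Submission
  imports Defs
begin

text \<open>Suppose a local antimagic labeling f uses only two vertex sums. The pendant vertex u
  gets the sum a = f(uv) \<le> q, and the class X of vertices with sum a meets every edge exactly
  once. Summing f^+ over X counts every label once, so |X| a = q(q+1)/2, whence 2|X| \<ge> q + 1.
  Summing degrees over X counts every edge once; as u is the only vertex of degree 1 and no
  vertex of X is isolated (a > 0), q \<ge> 1 + 2(|X| - 1). Hence q = 2|X| - 1 is odd.\<close>

lemma simple_graph_finite_edges:
  assumes "simple_graph V E"
  shows "finite E"
proof (rule finite_subset)
  show "E \<subseteq> Pow V" using assms unfolding simple_graph_def by auto
  show "finite (Pow V)" using assms unfolding simple_graph_def by simp
qed

lemma sum_incident_edges_swap:
  assumes "finite E" "finite X"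
  shows "(\<Sum>x\<in>X. \<Sum>e\<in>incident_edges E x. g e) = (\<Sum>e\<in>E. g e * card (e \<inter> X))"
proof -
  have "(\<Sum>x\<in>X. \<Sum>e\<in>incident_edges E x. g e) = (\<Sum>x\<in>X. \<Sum>e\<in>E. if x \<in> e then g e else 0)"
    unfolding incident_edges_def using assms by (simp add: sum.inter_filter)
  also have "\<dots> = (\<Sum>e\<in>E. \<Sum>x\<in>X. if x \<in> e then g e else 0)"
    by (rule sum.swap)
  also have "\<dots> = (\<Sum>e\<in>E. g e * card (e \<inter> X))"
  proof (rule sum.cong)
    fix e
    have "(\<Sum>x\<in>X. if x \<in> e then g e else 0) = (\<Sum>x\<in>{x\<in>X. x \<in> e}. g e)"
      using assms(2) sum.inter_filter[of X "\<lambda>_. g e" "\<lambda>x. x \<in> e"] by simp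
    also have "{x\<in>X. x \<in> e} = e \<inter> X" by blast
    finally show "(\<Sum>x\<in>X. if x \<in> e then g e else 0) = g e * card (e \<inter> X)" by simp
  qed simp
  finally show ?thesis .
qed

lemma sum_vertex_sum_transversal:
  assumes "finite E" "finite X" "\<forall>e\<in>E. card (e \<inter> X) = 1"
  shows "(\<Sum>x\<in>X. vertex_sum E f x) = (\<Sum>e\<in>E. f e)"
  using sum_incident_edges_swap[OF assms(1,2), of f] assms(3) unfolding vertex_sum_def by simp

lemma sum_degree_transversal:
  assumes "finite E" "finite X" "\<forall>e\<in>E. card (e \<inter> X) = 1"
  shows "(\<Sum>x\<in>X. degree E x) = card E"
  using sum_incident_edges_swap[OF assms(1,2), of "\<lambda>_. 1"] assms(3) unfolding degree_def by simp

lemma double_sum_bij_labels: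
  assumes "bij_betw f E {1..card E}"
  shows "2 * (\<Sum>e\<in>E. f e) = card E * (card E + 1)"
proof -
  have "(\<Sum>e\<in>E. f e) = (\<Sum>i = Suc 0..card E. i)"
    using sum.reindex_bij_betw[OF assms, of id] by simp
  then show ?thesis
    using double_gauss_sum_from_Suc_0[of "card E", where ?'a = nat] by simp
qed

lemma proper_two_colouring_class_transversal:
  assumes "simple_graph V E"
    and proper: "\<forall>x\<in>V. \<forall>y\<in>V. adjacent E x y \<longrightarrow> c x \<noteq> c y"
    and two: "c ` V \<subseteq> {a, b}"
    and "e \<in> E"
  shows "card (e \<inter> {x\<in>V. c x = a}) = 1"
proof -
  obtain x y where xy: "e = {x, y}" "x \<noteq> y"
    using assms(1,4) unfolding simple_graph_def by (meson card_2_iff)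
  then have "x \<in> V" "y \<in> V"
    using assms(1,4) unfolding simple_graph_def by auto
  moreover have "c x \<noteq> c y"
    using proper \<open>x \<in> V\<close> \<open>y \<in> V\<close> assms(4) xy(1) unfolding adjacent_def by blast
  moreover have "c x \<in> {a, b}" "c y \<in> {a, b}"
    using two \<open>x \<in> V\<close> \<open>y \<in> V\<close> by auto
  ultimately have "e \<inter> {x\<in>V. c x = a} = {x} \<or> e \<inter> {x\<in>V. c x = a} = {y}"
    using xy(1) by auto
  then show ?thesis by auto
qed

lemma two_le_degree_if_not_pendant:
  assumes "finite E" "x \<in> V" "x \<notin> pendant_vertices V E" "0 < vertex_sum E f x"
  shows "2 \<le> degree E x"
proof -
  have "incident_edges E x \<noteq> {}"
    using assms(4) unfolding vertex_sum_def by auto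
  then have "degree E x \<noteq> 0"
    using assms(1) unfolding degree_def incident_edges_def by simp
  moreover have "degree E x \<noteq> 1"
    using assms(2,3) unfolding pendant_vertices_def by simp
  ultimately show ?thesis by simp
qed

lemma double_card_transversal_le_pendant:
  assumes "finite E" "finite X" "\<forall>e\<in>E. card (e \<inter> X) = 1"
    and "u \<in> X" "degree E u = 1" "\<forall>x\<in>X - {u}. 2 \<le> degree E x"
  shows "2 * card X \<le> card E + 1"
proof -
  have "1 + (\<Sum>x\<in>X - {u}. degree E x) = card E"
    using sum_degree_transversal[OF assms(1-3)] sum.remove[OF assms(2,4), of "degree E"] assms(5)
    by simp
  moreover have "2 * card (X - {u}) \<le> (\<Sum>x\<in>X - {u}. degree E x)"
    using sum_mono[of "X - {u}" "\<lambda>_. 2" "degree E"] assms(6) by simp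
  moreover have "Suc (card (X - {u})) = card X"
    using assms(2,4) by (rule card_Suc_Diff1)
  ultimately show ?thesis
    by linarith
qed

lemma double_card_transversal_ge_constant_sum:
  assumes "bij_betw f E {1..card E}" "E \<noteq> {}"
    and "finite E" "finite X" "\<forall>e\<in>E. card (e \<inter> X) = 1"
    and "\<forall>x\<in>X. vertex_sum E f x = a" "a \<le> card E"
  shows "card E + 1 \<le> 2 * card X"
proof -
  have "card E * (card E + 1) = 2 * (card X * a)"
    using double_sum_bij_labels[OF assms(1)] sum_vertex_sum_transversal[OF assms(3-5), of f] assms(6)
    by simp
  also have "\<dots> \<le> card E * (2 * card X)"
    using assms(7) by simp
  finally have "card E * (card E + 1) \<le> card E * (2 * card X)" .
  moreover have "0 < card E"
    using assms(2,3) by auto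
  ultimately show ?thesis
    using mult_le_cancel1 by blast
qed

lemma pendant_vertex_edge:
  assumes "simple_graph V E" "u \<in> pendant_vertices V E"
  obtains v where "v \<in> V" "{u, v} \<in> E" "incident_edges E u = {{u, v}}"
proof -
  have "card (incident_edges E u) = 1"
    using assms(2) unfolding pendant_vertices_def degree_def by simp
  then obtain e where e: "incident_edges E u = {e}"
    by (rule card_1_singletonE)
  then have "e \<in> E" "u \<in> e"
    unfolding incident_edges_def by auto
  moreover obtain x y where "e = {x, y}" "e \<subseteq> V"
    using assms(1) \<open>e \<in> E\<close> unfolding simple_graph_def by (meson card_2_iff)
  ultimately obtain v where "e = {u, v}" "v \<in> V"
    by blast
  then show ?thesis
    using that \<open>e \<in> E\<close> e by blast
qed

lemma two_sum_labeling_odd_edges: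
  assumes "simple_graph V E" "local_antimagic_labeling V E f"
    and pendant: "pendant_vertices V E = {u}"
    and two: "vertex_sum E f ` V \<subseteq> {vertex_sum E f u, b}"
  shows "odd (card E)"
proof -
  define a where "a = vertex_sum E f u"
  define X where "X = {x\<in>V. vertex_sum E f x = a}"
  have bij: "bij_betw f E {1..card E}"
    and proper: "\<forall>x\<in>V. \<forall>y\<in>V. adjacent E x y \<longrightarrow> vertex_sum E f x \<noteq> vertex_sum E f y"
    using assms(2) unfolding local_antimagic_labeling_def by auto
  have finE: "finite E" and finX: "finite X"
    using assms(1) simple_graph_finite_edges unfolding simple_graph_def X_def by auto
  have uV: "u \<in> V" and deg_u: "degree E u = 1"
    using pendant unfolding pendant_vertices_def by auto
  obtain v where "{u, v} \<in> E" "incident_edges E u = {{u, v}}"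
    using pendant_vertex_edge[OF assms(1)] pendant by blast
  then have "a = f {u, v}" "f {u, v} \<in> {1..card E}"
    using bij unfolding a_def vertex_sum_def by (auto dest: bij_betwE)
  then have a_pos: "0 < a" and a_le: "a \<le> card E" and "E \<noteq> {}"
    by auto
  have transversal: "\<forall>e\<in>E. card (e \<inter> X) = 1"
    using proper_two_colouring_class_transversal[OF assms(1) proper] two
    unfolding X_def a_def by blast
  have "\<forall>x\<in>X - {u}. 2 \<le> degree E x"
    using two_le_degree_if_not_pendant[OF finE] pendant a_pos unfolding X_def by auto
  then have "2 * card X \<le> card E + 1"
    using double_card_transversal_le_pendant[OF finE finX transversal] uV deg_u unfolding X_def a_def by simp
  moreover have "card E + 1 \<le> 2 * card X"
    using double_card_transversal_ge_constant_sum[OF bij \<open>E \<noteq> {}\<close> finE finX transversal _ a_le]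
    unfolding X_def by simp
  ultimately have "card E + 1 = 2 * card X"
    by simp
  then show ?thesis
    by presburger
qed

theorem mainTheorem2:
  fixes V :: "'a set" and E :: "'a set set"
  assumes "simple_graph V E"
    and "connected_graph V E"
    and "bipartite_graph V E"
    and "even (card E)"
    and "card (pendant_vertices V E) = 1"
  shows "\<forall>f. local_antimagic_labeling V E f \<longrightarrow> 3 \<le> color_number V E f"
proof (intro allI impI)
  fix f assume lab: "local_antimagic_labeling V E f"
  obtain u where pendant: "pendant_vertices V E = {u}"
    using assms(5) by (rule card_1_singletonE)
  then obtain v where "v \<in> V" "{u, v} \<in> E"
    using pendant_vertex_edge[OF assms(1)] by blast
  moreover have "u \<in> V"
    using pendant unfolding pendant_vertices_def by auto
  ultimately have distinct: "vertex_sum E f u \<noteq> vertex_sum E f v"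
    using lab unfolding local_antimagic_labeling_def adjacent_def by blast
  show "3 \<le> color_number V E f"
  proof (rule ccontr)
    assume "\<not> 3 \<le> color_number V E f"
    moreover have "finite (vertex_sum E f ` V)"
      using assms(1) unfolding simple_graph_def by simp
    ultimately have "vertex_sum E f ` V = {vertex_sum E f u, vertex_sum E f v}"
      using distinct \<open>u \<in> V\<close> \<open>v \<in> V\<close> unfolding color_number_def
      by (intro card_seteq[symmetric]) auto
    then have "odd (card E)"
      using two_sum_labeling_odd_edges[OF assms(1) lab pendant] by blast
    then show False
      using assms(4) by simp
  qed
qed

end
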